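(* Let $X$ be a real Banach space and $T:X\rightrightarrows X^*$ a maximal monotone operator. Then $$D(\mathcal{J}\delta_T)\subseteq\{(x,x^* )\in X\times X^*\;|\;\langle x,x^*\rangle\leq 0\},$$ i.e., every $(x,x^* )\in X\times X^*$ with $\sup_{(y,y^* )\in T}\big(\langle y,x^*\rangle+\langle x,y^*\rangle\big)<\infty$ satisfies $\langle x,x^*\rangle\leq0$.
   Context: $X$ is identified with its image in $X^{**}$. An operator $T:X\rightrightarrows X^*$ is a subset of $X\times X^*$; it is monotone if $\langle x-y,x^*-y^*\rangle\geq0$ for all $(x,x^* ),(y,y^* )\in T$, and maximal monotone if it is monotone and not properly contained in another monotone operator. $\delta_T$ is the indicator function of $T$ (0 on $T$, $+\infty$ elsewhere). For $h:X\times X^*\to\mathbb{R}\cup\{\pm\infty\}$, $h^*(x^*,x^{**})=\sup_{(y,y^* )}\langle y,x^*\rangle+\langle x^{**},y^*\rangle-h(y,y^* )$ on $X^*\times X^{**}$, and $(\mathcal{J}h)(x,x^* )=h^*(x^*,x)$; $D(f)=\{z\;|\;f(z)<\infty\}$. *)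

theory Defs
  imports "HOL-Analysis.Analysis"
begin

(* Real Banach space X = type 'a::banach; dual X* = 'a =>L real;
  bidual X** = ('a =>L real) =>L real. Pairing <x,x*> = blinfun_apply x* x. *)

definition monotone_op :: "('a::real_normed_vector \<times> ('a \<Rightarrow>\<^sub>L real)) set \<Rightarrow> bool" where
  "monotone_op T \<longleftrightarrow>
     (\<forall>x xs y ys. (x, xs) \<in> T \<longrightarrow> (y, ys) \<in> T \<longrightarrow> blinfun_apply (xs - ys) (x - y) \<ge> 0)"

definition maximal_monotone :: "('a::real_normed_vector \<times> ('a \<Rightarrow>\<^sub>L real)) set \<Rightarrow> bool" where
  "maximal_monotone T \<longleftrightarrow> monotone_op T \<and> (\<forall>S. monotone_op S \<longrightarrow> T \<subseteq> S \<longrightarrow> S = T)"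

definition indicator_op :: "('a \<times> 'b) set \<Rightarrow> ('a \<times> 'b) \<Rightarrow> ereal" where
  "indicator_op T z = (if z \<in> T then 0 else \<infinity>)"

definition canon :: "'a::real_normed_vector \<Rightarrow> ('a \<Rightarrow>\<^sub>L real) \<Rightarrow>\<^sub>L real" where
  "canon x = Blinfun (\<lambda>f. blinfun_apply f x)"

definition conj_op :: "('a::real_normed_vector \<times> ('a \<Rightarrow>\<^sub>L real) \<Rightarrow> ereal)
    \<Rightarrow> ('a \<Rightarrow>\<^sub>L real) \<times> (('a \<Rightarrow>\<^sub>L real) \<Rightarrow>\<^sub>L real) \<Rightarrow> ereal" where
  "conj_op h = (\<lambda>(xs, xss). SUP yz \<in> UNIV. ereal (blinfun_apply xs (fst yz) + blinfun_apply xss (snd yz)) - h yz)"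

definition J_op :: "('a::real_normed_vector \<times> ('a \<Rightarrow>\<^sub>L real) \<Rightarrow> ereal)
    \<Rightarrow> 'a \<times> ('a \<Rightarrow>\<^sub>L real) \<Rightarrow> ereal" where
  "J_op h = (\<lambda>(x, xs). conj_op h (xs, canon x))"

definition dom_fun :: "('c \<Rightarrow> ereal) \<Rightarrow> 'c set" where
  "dom_fun f = {z. f z < \<infinity>}"

end

theory Submission
  imports Defs
begin

text \<open>Fix \<open>(a, a\<^sup>*) \<in> T\<close> and suppose \<open>\<langle>y, x\<^sup>*\<rangle> + \<langle>x, y\<^sup>*\<rangle> \<le> M\<close> on \<open>T\<close>, but \<open>c = \<langle>x, x\<^sup>*\<rangle> > 0\<close>.
  Move along the ray \<open>(a, a\<^sup>*) + \<lambda>(x, x\<^sup>*)\<close>. If the point lies in \<open>T\<close>, the bound gives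
  \<open>2\<lambda>c \<le> M - K\<close> with \<open>K = \<langle>a, x\<^sup>*\<rangle> + \<langle>x, a\<^sup>*\<rangle>\<close>; otherwise maximality yields \<open>(y, y\<^sup>*) \<in> T\<close>
  with negative pairing against it, and expanding that pairing with monotonicity
  against \<open>(a, a\<^sup>*)\<close> gives \<open>\<lambda>\<^sup>2c < \<lambda>(M - K)\<close>. Either way \<open>\<lambda>c \<le> M - K\<close> for all \<open>\<lambda> > 0\<close>,
  which is impossible.\<close>

lemma canon_apply: "blinfun_apply (canon x) f = blinfun_apply f x"
  unfolding canon_def
  by (simp add: bounded_linear_Blinfun_apply)

lemma J_op_indicator_op:
  "J_op (indicator_op T) (x, xs) =
     (SUP (y, ys) \<in> T. ereal (blinfun_apply xs y + blinfun_apply ys x))"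
proof -
  let ?g = "\<lambda>yz. ereal (blinfun_apply xs (fst yz) + blinfun_apply (snd yz) x)"
  have "J_op (indicator_op T) (x, xs) = (SUP yz. ?g yz - indicator_op T yz)"
    by (simp add: J_op_def conj_op_def canon_apply)
  also have "\<dots> = (SUP yz \<in> T. ?g yz)"
    \<comment> \<open>outside \<open>T\<close> the terms are \<open>-\<infinity>\<close> and do not contribute\<close>
  proof (rule antisym)
    show "(SUP yz. ?g yz - indicator_op T yz) \<le> (SUP yz \<in> T. ?g yz)"
      by (rule SUP_least) (auto simp: indicator_op_def intro: SUP_upper)
    show "(SUP yz \<in> T. ?g yz) \<le> (SUP yz. ?g yz - indicator_op T yz)"
    proof (rule SUP_least)
      fix yz assume "yz \<in> T"
      then have "?g yz = ?g yz - indicator_op T yz"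
        by (simp add: indicator_op_def)
      also have "\<dots> \<le> (SUP yz. ?g yz - indicator_op T yz)"
        by (rule SUP_upper) simp
      finally show "?g yz \<le> (SUP yz. ?g yz - indicator_op T yz)" .
    qed
  qed
  finally show ?thesis
    by (simp add: case_prod_beta)
qed

lemma SUP_ereal_less_PInf_bound:
  assumes "(SUP i \<in> A. ereal (f i)) < \<infinity>"
  obtains M where "\<And>i. i \<in> A \<Longrightarrow> f i \<le> M"
proof -
  have "f i \<le> real_of_ereal (SUP i \<in> A. ereal (f i))" if "i \<in> A" for i
  proof -
    have "ereal (f i) \<le> (SUP i \<in> A. ereal (f i))"
      using that by (rule SUP_upper)
    with assms show ?thesis
      by (cases "SUP i \<in> A. ereal (f i)") auto
  qed
  then show thesis by (rule that)
qed

lemma maximal_monotone_nonempty: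
  assumes "maximal_monotone (T :: ('a::real_normed_vector \<times> ('a \<Rightarrow>\<^sub>L real)) set)"
  shows "T \<noteq> {}"
proof
  assume "T = {}"
  have "monotone_op {(0::'a, 0::'a \<Rightarrow>\<^sub>L real)}"
    by (simp add: monotone_op_def)
  with assms \<open>T = {}\<close> show False
    unfolding maximal_monotone_def by blast
qed

lemma maximal_monotone_notin:
  assumes "maximal_monotone T" and "(z, zs) \<notin> T"
  obtains y ys where "(y, ys) \<in> T" and "blinfun_apply (zs - ys) (z - y) < 0"
proof -
  have mono: "monotone_op T"
    using assms(1) by (simp add: maximal_monotone_def)
  have "\<not> monotone_op (insert (z, zs) T)"
    using assms unfolding maximal_monotone_def by blast
  then obtain p ps q qs where
    pq: "(p, ps) \<in> insert (z, zs) T" "(q, qs) \<in> insert (z, zs) T"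
    and neg: "blinfun_apply (ps - qs) (p - q) < 0"
    unfolding monotone_op_def by (auto simp: not_le)
  have swap: "blinfun_apply (ps - qs) (p - q) = blinfun_apply (qs - ps) (q - p)"
    by (simp add: blinfun.diff_left blinfun.diff_right algebra_simps)
  from pq neg swap mono show thesis
    unfolding monotone_op_def by (auto intro: that simp: not_le) (metis not_le)+
qed

lemma blinfun_apply_shift_expand:
  "blinfun_apply ((as + l *\<^sub>R xs) - ys) ((a + l *\<^sub>R x) - y) =
   blinfun_apply (as - ys) (a - y)
   + l * (blinfun_apply xs a + blinfun_apply as x - (blinfun_apply xs y + blinfun_apply ys x))
   + l * l * blinfun_apply xs x"
  by (simp add: blinfun.diff_left blinfun.add_left blinfun.scaleR_left
      blinfun.diff_right blinfun.add_right blinfun.scaleR_right algebra_simps)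

lemma maximal_monotone_bounded_pairing_nonpos:
  assumes max: "maximal_monotone T" and aT: "(a, as) \<in> T"
    and bound: "\<And>y ys. (y, ys) \<in> T \<Longrightarrow> blinfun_apply xs y + blinfun_apply ys x \<le> M"
  shows "blinfun_apply xs x \<le> 0"
proof (rule ccontr)
  define c where "c = blinfun_apply xs x"
  define K where "K = blinfun_apply xs a + blinfun_apply as x"
  define l where "l = (\<bar>M - K\<bar> + 1) / c"
  assume "\<not> blinfun_apply xs x \<le> 0"
  then have "c > 0" by (simp add: c_def)
  then have "l > 0" by (simp add: l_def add_pos_nonneg)
  have "l * c \<le> M - K"
  proof (cases "(a + l *\<^sub>R x, as + l *\<^sub>R xs) \<in> T")
    case True
    from bound[OF this] have "K + 2 * (l * c) \<le> M"
      by (simp add: K_def c_def blinfun.add_left blinfun.add_right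
          blinfun.scaleR_left blinfun.scaleR_right algebra_simps)
    moreover have "l * c > 0"
      using \<open>l > 0\<close> \<open>c > 0\<close> by simp
    ultimately show ?thesis by simp
  next
    case False
    with max obtain y ys where yT: "(y, ys) \<in> T"
      and neg: "blinfun_apply ((as + l *\<^sub>R xs) - ys) ((a + l *\<^sub>R x) - y) < 0"
      by (rule maximal_monotone_notin)
    have "blinfun_apply (as - ys) (a - y) \<ge> 0"
      using max aT yT unfolding maximal_monotone_def monotone_op_def by blast
    with neg have "l * (l * c) < l * ((blinfun_apply xs y + blinfun_apply ys x) - K)"
      unfolding blinfun_apply_shift_expand K_def c_def by (simp add: algebra_simps)
    also have "\<dots> \<le> l * (M - K)"
      using bound[OF yT] \<open>l > 0\<close> by simp
    finally show ?thesis
      using \<open>l > 0\<close> by simp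
  qed
  moreover have "l * c = \<bar>M - K\<bar> + 1"
    using \<open>c > 0\<close> by (simp add: l_def)
  ultimately show False by simp
qed

theorem theorem4p6:
  fixes T :: "('a::banach \<times> ('a \<Rightarrow>\<^sub>L real)) set"
  assumes "maximal_monotone T"
  shows "dom_fun (J_op (indicator_op T)) \<subseteq> {(x, xs). blinfun_apply xs x \<le> 0}"
proof clarify
  fix x xs
  assume "(x, xs) \<in> dom_fun (J_op (indicator_op T))"
  then have "(SUP p \<in> T. ereal (blinfun_apply xs (fst p) + blinfun_apply (snd p) x)) < \<infinity>"
    by (simp add: dom_fun_def J_op_indicator_op case_prod_beta)
  then obtain M where "\<And>p. p \<in> T \<Longrightarrow> blinfun_apply xs (fst p) + blinfun_apply (snd p) x \<le> M"
    by (rule SUP_ereal_less_PInf_bound) blast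
  then have bound: "\<And>y ys. (y, ys) \<in> T \<Longrightarrow> blinfun_apply xs y + blinfun_apply ys x \<le> M"
    by fastforce
  obtain a as where "(a, as) \<in> T"
    using maximal_monotone_nonempty[OF assms] by auto
  from assms this bound show "blinfun_apply xs x \<le> 0"
    by (rule maximal_monotone_bounded_pairing_nonpos)
qed

end
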